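(* Let $G \neq \{1\}$ be a finitely generated, residually finite group, and let $\operatorname{rk}(G)$ denote the minimal number of elements generating $G$. Let $F = F(\mathcal{X})$ be a free group with basis $\mathcal{X}$ of cardinality $\operatorname{rk}(G)$, let $R \trianglelefteq F$ be a normal subgroup, and let $\pi_\star \colon F(\mathcal{X})/R \to G$ be an isomorphism. Suppose $R \neq \{1\}$, and let $r \in R \setminus \{1\}$ be an element of minimal length, where the length of an element of $F$ is the number of letters of the freely reduced word in $\mathcal{X} \cup \mathcal{X}^{-1}$ representing it. Then there exists a subgroup $F_1$ of finite index in $F$ with $R \subseteq F_1$ such that $r$ is a member of some basis of the (free) group $F_1$.
   Context: The rank of a finitely generated group is the minimal cardinality of a generating set. A basis of a free group is a free generating set. *)

theory Defs
  imports "HOL-Algebra.Algebra"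
begin

text \<open>Words over an alphabet: a letter (x, True) stands for x, (x, False) for its inverse.\<close>

fun word_eval :: "('a, 'b) monoid_scheme \<Rightarrow> ('a \<times> bool) list \<Rightarrow> 'a" where
  "word_eval G [] = \<one>\<^bsub>G\<^esub>"
| "word_eval G ((x, b) # w) = (if b then x else inv\<^bsub>G\<^esub> x) \<otimes>\<^bsub>G\<^esub> word_eval G w"

fun reduced :: "('a \<times> bool) list \<Rightarrow> bool" where
  "reduced [] = True"
| "reduced [_] = True"
| "reduced ((x, b) # (y, c) # w) = (\<not> (x = y \<and> b \<noteq> c) \<and> reduced ((y, c) # w))"

definition word_over :: "'a set \<Rightarrow> ('a \<times> bool) list \<Rightarrow> bool" where
  "word_over A ws \<longleftrightarrow> (\<forall>p \<in> set ws. fst p \<in> A)"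

definition free_basis :: "('a, 'b) monoid_scheme \<Rightarrow> 'a set \<Rightarrow> bool" where
  "free_basis G B \<longleftrightarrow> B \<subseteq> carrier G \<and> generate G B = carrier G \<and>
     (\<forall>w. word_over B w \<and> reduced w \<and> w \<noteq> [] \<longrightarrow> word_eval G w \<noteq> \<one>\<^bsub>G\<^esub>)"

definition word_length :: "('a, 'b) monoid_scheme \<Rightarrow> 'a set \<Rightarrow> 'a \<Rightarrow> nat" where
  "word_length G A g = length (THE w. word_over A w \<and> reduced w \<and> word_eval G w = g)"

definition finitely_generated :: "('a, 'b) monoid_scheme \<Rightarrow> bool" where
  "finitely_generated G \<longleftrightarrow> (\<exists>S. finite S \<and> S \<subseteq> carrier G \<and> generate G S = carrier G)"

definition group_rank :: "('a, 'b) monoid_scheme \<Rightarrow> nat" where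
  "group_rank G = (LEAST n. \<exists>S. finite S \<and> card S = n \<and> S \<subseteq> carrier G \<and> generate G S = carrier G)"

definition residually_finite :: "('a, 'b) monoid_scheme \<Rightarrow> bool" where
  "residually_finite G \<longleftrightarrow> (\<forall>g \<in> carrier G. g \<noteq> \<one>\<^bsub>G\<^esub> \<longrightarrow>
     (\<exists>N. N \<lhd> G \<and> finite (carrier (G Mod N)) \<and> g \<notin> N))"

end

theory Submission
  imports Defs
begin

(*
  Write r as a freely reduced word w = x_1 ... x_n and let p_i be its prefix of length i.
  By minimality of r no nonempty subword of w of length less than n evaluates into R; since
  p_i p_j^-1 is conjugate to the inverse of such a subword, the finitely many elements
  p_i p_j^-1 (i < j < n) lie outside R.  As F/R is residually finite, there is a subgroup F1 of
  finite index containing R that still avoids all of them, so p_0, ..., p_(n-1) lie in distinct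
  cosets of F1.  These prefixes form a prefix-closed partial Schreier transversal of F1, which
  extends to a full one.  The Schreier basis element attached to the prefix p_(n-1) and the
  letter x_n is p_(n-1) x_n times the inverse of the representative of F1 r = F1, i.e. r itself
  (or r^-1, depending on the sign of x_n, and inverting one basis element yields a basis again).
*)

section \<open>Words and their values in a group\<close>

definition letter_inv :: "'a \<times> bool \<Rightarrow> 'a \<times> bool" where
  "letter_inv l = (fst l, \<not> snd l)"

definition word_inv :: "('a \<times> bool) list \<Rightarrow> ('a \<times> bool) list" where
  "word_inv w = rev (map letter_inv w)"

definition letter_eval :: "('a, 'b) monoid_scheme \<Rightarrow> 'a \<times> bool \<Rightarrow> 'a" where
  "letter_eval G l = (if snd l then fst l else inv\<^bsub>G\<^esub> (fst l))"

lemma word_eval_Cons_letter: "word_eval G (l # w) = letter_eval G l \<otimes>\<^bsub>G\<^esub> word_eval G w"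
  by (cases l) (simp add: letter_eval_def)

lemma letter_inv_letter_inv [simp]: "letter_inv (letter_inv l) = l"
  by (simp add: letter_inv_def)

lemma fst_letter_inv [simp]: "fst (letter_inv l) = fst l"
  by (simp add: letter_inv_def)

lemma snd_letter_inv [simp]: "snd (letter_inv l) = (\<not> snd l)"
  by (simp add: letter_inv_def)

lemma letter_inv_neq [simp]: "letter_inv l \<noteq> l"
  by (cases l) (simp add: letter_inv_def)

lemma letter_inv_eq_iff [simp]: "letter_inv a = letter_inv b \<longleftrightarrow> a = b"
  by (cases a; cases b) (auto simp: letter_inv_def)

lemma word_inv_word_inv [simp]: "word_inv (word_inv w) = w"
  by (simp add: word_inv_def rev_map comp_def)

lemma word_inv_Nil [simp]: "word_inv [] = []"
  by (simp add: word_inv_def)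

lemma word_inv_Cons: "word_inv (l # w) = word_inv w @ [letter_inv l]"
  by (simp add: word_inv_def)

lemma word_inv_append [simp]: "word_inv (u @ v) = word_inv v @ word_inv u"
  by (simp add: word_inv_def)

lemma word_inv_eq_Nil_iff [simp]: "word_inv w = [] \<longleftrightarrow> w = []"
  by (simp add: word_inv_def)

lemma hd_word_inv: "w \<noteq> [] \<Longrightarrow> hd (word_inv w) = letter_inv (last w)"
  by (induction w) (auto simp: word_inv_def hd_append)

lemma last_word_inv: "w \<noteq> [] \<Longrightarrow> last (word_inv w) = letter_inv (hd w)"
  by (cases w) (auto simp: word_inv_def)

lemma word_over_Nil [simp]: "word_over A []"
  by (simp add: word_over_def)

lemma word_over_Cons [simp]: "word_over A (l # w) \<longleftrightarrow> fst l \<in> A \<and> word_over A w"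
  by (auto simp: word_over_def)

lemma word_over_append [simp]: "word_over A (u @ v) \<longleftrightarrow> word_over A u \<and> word_over A v"
  by (auto simp: word_over_def)

lemma word_over_word_inv [simp]: "word_over A (word_inv w) \<longleftrightarrow> word_over A w"
  by (auto simp: word_over_def word_inv_def letter_inv_def)

lemma word_over_take: "word_over A w \<Longrightarrow> word_over A (take k w)"
  by (auto simp: word_over_def dest: in_set_takeD)

lemma word_over_drop: "word_over A w \<Longrightarrow> word_over A (drop k w)"
  by (auto simp: word_over_def dest: in_set_dropD)

lemma reduced_Cons_Cons: "reduced (a # b # w) \<longleftrightarrow> b \<noteq> letter_inv a \<and> reduced (b # w)"
  by (cases a; cases b) (auto simp: letter_inv_def)

lemma reduced_ConsD: "reduced (a # w) \<Longrightarrow> reduced w"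
  by (cases w) (auto simp: reduced_Cons_Cons)

lemma reduced_append:
  "reduced (u @ v) \<longleftrightarrow>
     reduced u \<and> reduced v \<and> (u \<noteq> [] \<and> v \<noteq> [] \<longrightarrow> hd v \<noteq> letter_inv (last u))"
proof (induction u)
  case (Cons a u)
  then show ?case
    by (cases u; cases v) (auto simp: reduced_Cons_Cons)
qed simp

lemma reduced_snoc:
  "reduced (w @ [l]) \<longleftrightarrow> reduced w \<and> (w \<noteq> [] \<longrightarrow> last w \<noteq> letter_inv l)"
  by (auto simp: reduced_append letter_inv_def)

lemma not_reduced_snoc_cancel: "\<not> reduced (w @ [letter_inv l, l])"
  using reduced_append[of w "[letter_inv l, l]"] by (simp add: reduced_Cons_Cons)

lemma reduced_word_inv [simp]: "reduced (word_inv w) \<longleftrightarrow> reduced w"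
proof -
  have "reduced (word_inv w)" if "reduced w" for w :: "('a \<times> bool) list"
    using that
  proof (induction w)
    case (Cons a w)
    then have "reduced w" "w \<noteq> [] \<Longrightarrow> hd w \<noteq> letter_inv a"
      by (cases w; auto simp: reduced_Cons_Cons)+
    then show ?case
      using Cons.IH by (auto simp: word_inv_Cons reduced_append last_word_inv)
  qed simp
  from this[of w] this[of "word_inv w"] show ?thesis by auto
qed

lemma reduced_take: "reduced w \<Longrightarrow> reduced (take k w)"
  using reduced_append[of "take k w" "drop k w"] by simp

lemma reduced_drop: "reduced w \<Longrightarrow> reduced (drop k w)"
  using reduced_append[of "take k w" "drop k w"] by simp

fun reduce_Cons :: "'a \<times> bool \<Rightarrow> ('a \<times> bool) list \<Rightarrow> ('a \<times> bool) list" where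
  "reduce_Cons l [] = [l]"
| "reduce_Cons l (m # w) = (if m = letter_inv l then w else l # m # w)"

definition free_reduce :: "('a \<times> bool) list \<Rightarrow> ('a \<times> bool) list" where
  "free_reduce w = foldr reduce_Cons w []"

lemma reduced_free_reduce: "reduced (free_reduce w)"
proof (induction w)
  case (Cons l w)
  then show ?case
    by (cases "free_reduce w") (auto simp: free_reduce_def reduced_Cons_Cons dest: reduced_ConsD)
qed (simp add: free_reduce_def)

lemma word_over_free_reduce: "word_over A w \<Longrightarrow> word_over A (free_reduce w)"
proof (induction w)
  case (Cons l w)
  then show ?case
    by (cases "free_reduce w") (auto simp: free_reduce_def)
qed (simp add: free_reduce_def)

context group
begin

lemma inv_mult_cancel_left: "x \<in> carrier G \<Longrightarrow> y \<in> carrier G \<Longrightarrow> inv x \<otimes> (x \<otimes> y) = y"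
  by (simp add: m_assoc[symmetric])

lemma generate_if_inv_mem: "x \<in> carrier G \<Longrightarrow> inv x \<in> A \<Longrightarrow> x \<in> generate G A"
  using generate.inv[of "inv x" A G] by simp

lemma letter_eval_closed: "fst l \<in> carrier G \<Longrightarrow> letter_eval G l \<in> carrier G"
  by (simp add: letter_eval_def)

lemma letter_eval_letter_inv:
  "fst l \<in> carrier G \<Longrightarrow> letter_eval G (letter_inv l) = inv (letter_eval G l)"
  by (simp add: letter_eval_def letter_inv_def)

lemma word_eval_closed: "A \<subseteq> carrier G \<Longrightarrow> word_over A w \<Longrightarrow> word_eval G w \<in> carrier G"
  by (induction w) (auto simp: word_eval_Cons_letter letter_eval_closed)

lemma word_eval_append:
  assumes "A \<subseteq> carrier G" "word_over A u" "word_over A v"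
  shows "word_eval G (u @ v) = word_eval G u \<otimes> word_eval G v"
  using assms(2)
proof (induction u)
  case (Cons l u)
  then have "fst l \<in> carrier G" using assms(1) by auto
  with Cons show ?case
    using assms
    by (simp add: word_eval_Cons_letter m_assoc letter_eval_closed word_eval_closed[of A])
qed (use assms in \<open>simp add: word_eval_closed\<close>)

lemma word_eval_snoc:
  "A \<subseteq> carrier G \<Longrightarrow> word_over A w \<Longrightarrow> fst l \<in> A \<Longrightarrow>
     word_eval G (w @ [l]) = word_eval G w \<otimes> letter_eval G l"
  by (subst word_eval_append[of A]) (auto simp: word_eval_Cons_letter letter_eval_closed)

lemma word_eval_word_inv:
  assumes "A \<subseteq> carrier G" "word_over A w"
  shows "word_eval G (word_inv w) = inv (word_eval G w)"
  using assms(2)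
proof (induction w)
  case (Cons l w)
  have l: "fst l \<in> A" "fst l \<in> carrier G" and w: "word_over A w"
    using Cons.prems assms(1) by auto
  have "word_eval G (word_inv (l # w)) = inv (word_eval G w) \<otimes> inv (letter_eval G l)"
    using Cons.IH l w assms(1)
    by (simp add: word_inv_Cons word_eval_snoc letter_eval_letter_inv)
  also have "\<dots> = inv (letter_eval G l \<otimes> word_eval G w)"
    using l w assms(1) by (simp add: inv_mult_group letter_eval_closed word_eval_closed)
  finally show ?case by (simp add: word_eval_Cons_letter)
qed simp

lemma letter_eq_letter_inv:
  assumes "fst l \<in> carrier G" "fst l' \<in> carrier G"
    and "letter_eval G l' = inv (letter_eval G l)" "snd l' = (\<not> snd l)"
  shows "l' = letter_inv l"
  using assms by (cases l; cases l'; cases "snd l") (auto simp: letter_eval_def letter_inv_def)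

lemma rcos_eq_iff_mult_inv:
  assumes "subgroup H G" "a \<in> carrier G" "b \<in> carrier G"
  shows "H #> a = H #> b \<longleftrightarrow> a \<otimes> inv b \<in> H"
  using assms coset_mult_inv1 coset_mult_inv2 coset_join1 coset_join2 subgroup.subset
  by (metis inv_closed m_closed)

lemma rcos_mult_right:
  assumes "subgroup H G" "a \<in> carrier G" "b \<in> carrier G" "c \<in> carrier G"
  shows "H #> (a \<otimes> c) = H #> (b \<otimes> c) \<longleftrightarrow> H #> a = H #> b"
  using assms by (simp add: rcos_eq_iff_mult_inv inv_mult_group m_assoc[symmetric])
    (simp add: m_assoc)

end

section \<open>Free bases\<close>

context group
begin

lemma generate_insert_inv_remove:
  assumes B: "B \<subseteq> carrier G" and b: "b \<in> B"
  shows "generate G (insert (inv b) (B - {b})) = generate G B"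
proof -
  let ?B' = "insert (inv b) (B - {b})"
  have B': "?B' \<subseteq> carrier G" using B b by auto
  have "?B' \<subseteq> generate G B"
    using b by (auto intro: generate.inv generate.incl)
  then have "generate G ?B' \<subseteq> generate G B"
    by (rule generate_subgroup_incl[OF _ generate_is_subgroup[OF B]])
  moreover have "B \<subseteq> generate G ?B'"
  proof
    fix y assume "y \<in> B"
    moreover have "inv (inv b) \<in> generate G ?B'" by (rule generate.inv) simp
    ultimately show "y \<in> generate G ?B'"
      using B b by (cases "y = b") (auto intro: generate.incl)
  qed
  then have "generate G B \<subseteq> generate G ?B'"
    by (rule generate_subgroup_incl[OF _ generate_is_subgroup[OF B']])
  ultimately show ?thesis by (rule antisym)
qed

lemma free_basis_insert_inv:
  assumes fb: "free_basis G B" and b: "b \<in> B"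
  shows "free_basis G (insert (inv b) (B - {b}))"
proof -
  let ?B' = "insert (inv b) (B - {b})"
  have B: "B \<subseteq> carrier G" and free: "\<And>w. word_over B w \<Longrightarrow> reduced w \<Longrightarrow> w \<noteq> [] \<Longrightarrow> word_eval G w \<noteq> \<one>"
    using fb by (auto simp: free_basis_def)
  then have bc: "b \<in> carrier G" using b by blast
  \<comment> \<open>rewrite a word over the new basis letter by letter as a word over \<open>B\<close>\<close>
  define f where "f l = (if fst l = inv b then (b, \<not> snd l) else l)" for l :: "'a \<times> bool"
  have f_inj: "p = q" if "fst p \<in> ?B'" "fst q \<in> ?B'" "f p = f q" for p q
    using that by (cases p; cases q) (auto simp: f_def split: if_splits)
  have f_letter_inv: "f (letter_inv l) = letter_inv (f l)" for l
    by (simp add: f_def letter_inv_def)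
  have f_eval: "letter_eval G (f l) = letter_eval G l" if "fst l \<in> ?B'" for l
    using that bc by (auto simp: f_def letter_eval_def)
  have "word_eval G (map f ws) = word_eval G ws" if "word_over ?B' ws" for ws
    using that by (induction ws) (auto simp: word_eval_Cons_letter f_eval)
  moreover have "word_over B (map f ws)" if "word_over ?B' ws" for ws
    using that b by (auto simp: word_over_def f_def)
  moreover have "reduced (map f ws)" if "word_over ?B' ws" "reduced ws" for ws
    using that
  proof (induction ws rule: induct_list012)
    case (3 p q ws)
    have "f q \<noteq> letter_inv (f p)"
      using 3(3,4) f_inj[of q "letter_inv p"]
      by (auto simp: reduced_Cons_Cons f_letter_inv[symmetric])
    then show ?case using 3 by (auto simp: reduced_Cons_Cons)
  qed simp_all
  ultimately have "word_eval G ws \<noteq> \<one>" if "word_over ?B' ws" "reduced ws" "ws \<noteq> []" for ws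
    using that free[of "map f ws"] by simp
  then show ?thesis
    using B b generate_insert_inv_remove[OF B b] fb by (auto simp: free_basis_def)
qed

end

locale free_group_basis = group +
  fixes S
  assumes free_basis: "free_basis G S"
begin

lemma basis_subset: "S \<subseteq> carrier G"
  using free_basis by (simp add: free_basis_def)

lemma basis_letter_closed: "fst l \<in> S \<Longrightarrow> letter_eval G l \<in> carrier G"
  using basis_subset by (auto intro: letter_eval_closed)

lemma basis_letter_eval_inv: "fst l \<in> S \<Longrightarrow> letter_eval G (letter_inv l) = inv (letter_eval G l)"
  using basis_subset by (auto intro: letter_eval_letter_inv)

lemmas eval_closed = word_eval_closed[OF basis_subset]
  and eval_append = word_eval_append[OF basis_subset]
  and eval_snoc = word_eval_snoc[OF basis_subset]
  and eval_word_inv = word_eval_word_inv[OF basis_subset]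

lemma eval_cancel_word_inv:
  "word_over S u \<Longrightarrow> word_over S d \<Longrightarrow> word_over S v \<Longrightarrow>
     word_eval G (u @ word_inv d @ d @ v) = word_eval G (u @ v)"
  by (simp add: eval_append eval_word_inv eval_closed inv_mult_cancel_left)

lemma eval_snoc_cancel:
  assumes "word_over S u" "fst l \<in> S"
  shows "word_eval G (u @ [letter_inv l, l]) = word_eval G u"
proof -
  have "word_eval G [letter_inv l, l] = \<one>"
    using assms(2) by (simp add: word_eval_Cons_letter basis_letter_eval_inv basis_letter_closed)
  then show ?thesis
    using assms eval_append[of u "[letter_inv l, l]"] by (simp add: eval_closed)
qed

lemma eval_reduce_Cons:
  assumes "fst l \<in> S" "word_over S w"
  shows "word_eval G (reduce_Cons l w) = letter_eval G l \<otimes> word_eval G w"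
proof (cases w)
  case (Cons m w')
  have "letter_eval G l \<otimes> (inv (letter_eval G l) \<otimes> word_eval G w') = word_eval G w'"
    using assms Cons by (simp add: basis_letter_closed eval_closed m_assoc[symmetric])
  then show ?thesis
    using assms Cons basis_subset
    by (auto simp: word_eval_Cons_letter letter_eval_letter_inv)
qed (simp add: word_eval_Cons_letter)

lemma eval_free_reduce: "word_over S w \<Longrightarrow> word_eval G (free_reduce w) = word_eval G w"
proof (induction w)
  case (Cons l w)
  then show ?case
    using eval_reduce_Cons[of l "free_reduce w"] word_over_free_reduce[of S w]
    by (simp add: free_reduce_def word_eval_Cons_letter)
qed (simp add: free_reduce_def)

lemma reduced_word_neq_one:
  "word_over S w \<Longrightarrow> reduced w \<Longrightarrow> w \<noteq> [] \<Longrightarrow> word_eval G w \<noteq> \<one>"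
  using free_basis by (simp add: free_basis_def)

lemma exists_word: "g \<in> carrier G \<Longrightarrow> \<exists>w. word_over S w \<and> word_eval G w = g"
proof -
  assume "g \<in> carrier G"
  then have "g \<in> generate G S"
    using free_basis by (simp add: free_basis_def)
  then show ?thesis
  proof induction
    case one
    show ?case by (intro exI[of _ "[]"]) simp
  next
    case (incl h)
    then show ?case using basis_subset by (intro exI[of _ "[(h, True)]"]) auto
  next
    case (inv h)
    then show ?case using basis_subset by (intro exI[of _ "[(h, False)]"]) auto
  next
    case (eng g h)
    then obtain u v where "word_over S u" "word_eval G u = g" "word_over S v" "word_eval G v = h"
      by blast
    then show ?case by (intro exI[of _ "u @ v"]) (simp add: eval_append)
  qed
qed

lemma exists_reduced_word:
  "g \<in> carrier G \<Longrightarrow> \<exists>w. word_over S w \<and> reduced w \<and> word_eval G w = g"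
  using exists_word by (metis eval_free_reduce reduced_free_reduce word_over_free_reduce)

lemma reduced_word_unique:
  "word_over S u \<Longrightarrow> word_over S v \<Longrightarrow> reduced u \<Longrightarrow> reduced v \<Longrightarrow>
     word_eval G u = word_eval G v \<Longrightarrow> u = v"
proof (induction u arbitrary: v)
  case Nil
  then show ?case using reduced_word_neq_one[of v] by auto
next
  case (Cons a u)
  show ?case
  proof (cases v)
    case Nil
    then show ?thesis using Cons.prems reduced_word_neq_one[of "a # u"] by auto
  next
    case (Cons b v')
    show ?thesis
    proof (cases "a = b")
      case True
      then have "word_eval G u = word_eval G v'"
        using Cons.prems Cons basis_letter_closed by (simp add: word_eval_Cons_letter eval_closed)
      then show ?thesis
        using Cons.IH[of v'] Cons.prems Cons True by (auto dest: reduced_ConsD)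
    next
      case False
      \<comment> \<open>otherwise \<open>v\<inverse> u\<close> is a nonempty reduced word evaluating to \<open>\<one>\<close>\<close>
      have "reduced (word_inv v @ a # u)"
        using Cons.prems Cons False by (subst reduced_append) (auto simp: last_word_inv)
      moreover have "word_eval G (word_inv v @ a # u) = \<one>"
        using Cons.prems by (simp add: eval_append eval_word_inv eval_closed del: word_over_Cons)
      ultimately show ?thesis
        using Cons.prems reduced_word_neq_one[of "word_inv v @ a # u"] by simp
    qed
  qed
qed

lemma word_length_reduced:
  "word_over S w \<Longrightarrow> reduced w \<Longrightarrow> word_length G S (word_eval G w) = length w"
  unfolding word_length_def
  by (rule arg_cong[of _ _ length], rule the_equality) (auto intro: reduced_word_unique)

end

section \<open>Schreier transversals and Schreier bases\<close>

locale partial_schreier_transversal = free_group_basis +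
  fixes H and T
  assumes subgroup_H: "subgroup H G"
    and Nil_in_transversal: "[] \<in> T"
    and transversal_word_over: "t \<in> T \<Longrightarrow> word_over S t"
    and transversal_reduced: "t \<in> T \<Longrightarrow> reduced t"
    and transversal_prefix_closed: "u @ v \<in> T \<Longrightarrow> u \<in> T"
    and transversal_inj:
      "t \<in> T \<Longrightarrow> t' \<in> T \<Longrightarrow> H #> word_eval G t = H #> word_eval G t' \<Longrightarrow> t = t'"

lemma (in partial_schreier_transversal) transversal_snoc_cancel:
  assumes t: "t \<in> T" and l: "fst l \<in> S" and "\<not> reduced (t @ [l])"
  obtains t' where "t' \<in> T" "t = t' @ [letter_inv l]" "word_eval G (t @ [l]) = word_eval G t'"
proof -
  have "t \<noteq> [] \<and> last t = letter_inv l"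
    using assms transversal_reduced by (auto simp: reduced_snoc)
  then obtain t' where t': "t = t' @ [letter_inv l]"
    using append_butlast_last_id[of t] by metis
  have "t' \<in> T" using t unfolding t' by (rule transversal_prefix_closed)
  moreover have "word_eval G (t @ [l]) = word_eval G t'"
    using t transversal_word_over[OF t] l unfolding t' by (simp add: eval_snoc_cancel)
  ultimately show ?thesis using t' that by blast
qed

locale schreier_transversal = partial_schreier_transversal +
  assumes transversal_surj: "g \<in> carrier G \<Longrightarrow> \<exists>t\<in>T. H #> word_eval G t = H #> g"
begin

definition coset_rep :: "'a \<Rightarrow> ('a \<times> bool) list" where
  "coset_rep g = (THE t. t \<in> T \<and> H #> word_eval G t = H #> g)"

lemma coset_rep: "g \<in> carrier G \<Longrightarrow> coset_rep g \<in> T \<and> H #> word_eval G (coset_rep g) = H #> g"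
proof -
  assume "g \<in> carrier G"
  then have "\<exists>!t. t \<in> T \<and> H #> word_eval G t = H #> g"
    using transversal_surj[of g] transversal_inj by metis
  then show ?thesis unfolding coset_rep_def by (rule theI')
qed

lemma coset_rep_eq: "t \<in> T \<Longrightarrow> g \<in> carrier G \<Longrightarrow> H #> word_eval G t = H #> g \<Longrightarrow> coset_rep g = t"
  using coset_rep transversal_inj by metis

lemma transversal_eval_closed: "t \<in> T \<Longrightarrow> word_eval G t \<in> carrier G"
  using transversal_word_over eval_closed by blast

lemma coset_rep_of_mem: "g \<in> H \<Longrightarrow> coset_rep g = []"
  using subgroup_H Nil_in_transversal
  by (intro coset_rep_eq) (auto simp: coset_join2 subgroup.mem_carrier subgroup.subset)

text \<open>An edge of the Schreier coset graph of \<open>H\<close> that is not an edge of the spanning tree \<open>T\<close>.\<close>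

definition cross_edge :: "('a \<times> bool) list \<Rightarrow> 'a \<times> bool \<Rightarrow> ('a \<times> bool) list \<Rightarrow> bool" where
  "cross_edge a m c \<longleftrightarrow> a \<in> T \<and> c \<in> T \<and> fst m \<in> S \<and>
     reduced (a @ [m]) \<and> reduced (c @ [letter_inv m]) \<and> a @ [m] \<notin> T \<and> c @ [letter_inv m] \<notin> T \<and>
     H #> word_eval G (a @ [m]) = H #> word_eval G c"

lemma cross_edge_word_over:
  "cross_edge a m c \<Longrightarrow> word_over S a \<and> word_over S c \<and> fst m \<in> S"
  using transversal_word_over by (auto simp: cross_edge_def)

lemma cross_edge_sym:
  assumes "cross_edge a m c"
  shows "cross_edge c (letter_inv m) a"
proof -
  have w: "word_over S a" "word_over S c" "fst m \<in> S"
    using cross_edge_word_over[OF assms] by auto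
  have "H #> word_eval G (c @ [letter_inv m]) = H #> (word_eval G c \<otimes> inv (letter_eval G m))"
    using w basis_subset by (simp add: eval_snoc letter_eval_letter_inv subsetD)
  also have "\<dots> = H #> (word_eval G (a @ [m]) \<otimes> inv (letter_eval G m))"
    using assms w
    by (simp add: rcos_mult_right[OF subgroup_H] cross_edge_def eval_closed basis_letter_closed)
  also have "\<dots> = H #> word_eval G a"
    using w by (simp add: eval_snoc eval_closed basis_letter_closed m_assoc)
  finally show ?thesis
    using assms by (auto simp: cross_edge_def)
qed

lemma cross_edge_word_reduced:
  assumes "cross_edge a m c"
  shows "reduced (a @ [m] @ word_inv c)"
proof -
  have "c \<noteq> [] \<Longrightarrow> last c \<noteq> m" "reduced c"
    using assms transversal_reduced by (auto simp: cross_edge_def reduced_snoc)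
  then show ?thesis
    using assms reduced_append[of "a @ [m]" "word_inv c"] by (auto simp: cross_edge_def hd_word_inv)
qed

lemma cross_edge_eval_in_subgroup:
  assumes "cross_edge a m c"
  shows "word_eval G (a @ [m] @ word_inv c) \<in> H"
proof -
  have w: "word_over S (a @ [m])" "word_over S c"
    using cross_edge_word_over[OF assms] by auto
  then have "word_eval G ((a @ [m]) @ word_inv c) = word_eval G (a @ [m]) \<otimes> inv (word_eval G c)"
    by (simp add: eval_append eval_word_inv del: append_assoc)
  moreover have "H #> word_eval G (a @ [m]) = H #> word_eval G c"
    using assms by (simp add: cross_edge_def)
  ultimately show ?thesis
    using w by (simp add: rcos_eq_iff_mult_inv[OF subgroup_H] eval_closed del: word_over_append)
qed

lemma cross_edge_coset_rep:
  assumes a: "a \<in> T" and m: "fst m \<in> S" and red: "reduced (a @ [m])" and new: "a @ [m] \<notin> T"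
  shows "cross_edge a m (coset_rep (word_eval G (a @ [m])))"
proof -
  let ?g = "word_eval G (a @ [m])"
  let ?c = "coset_rep ?g"
  have aw: "word_over S a" using a transversal_word_over by blast
  have g: "?g \<in> carrier G" using aw m by (simp add: eval_closed)
  have c: "?c \<in> T" "H #> word_eval G ?c = H #> ?g"
    using coset_rep[OF g] by auto
  have cw: "word_over S ?c" using c transversal_word_over by blast
  have pred_unique: "t = a" if "t \<in> T" "H #> (word_eval G t \<otimes> letter_eval G m) = H #> ?g" for t
  proof -
    have "H #> (word_eval G t \<otimes> letter_eval G m) = H #> (word_eval G a \<otimes> letter_eval G m)"
      using that aw m by (simp add: eval_snoc)
    then show ?thesis
      using that a aw m transversal_inj
      by (simp add: rcos_mult_right[OF subgroup_H] transversal_eval_closed eval_closed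
          basis_letter_closed)
  qed
  have "?c @ [letter_inv m] \<notin> T"
  proof
    assume cm: "?c @ [letter_inv m] \<in> T"
    have "H #> (word_eval G (?c @ [letter_inv m]) \<otimes> letter_eval G m) = H #> ?g"
      using c cw m basis_subset
      by (simp add: eval_snoc letter_eval_letter_inv basis_letter_closed eval_closed m_assoc
          subsetD)
    then have "?c @ [letter_inv m] = a" using pred_unique cm by blast
    then show False using red not_reduced_snoc_cancel[of ?c m]
      by (metis append.assoc append_Cons append_Nil)
  qed
  moreover have "reduced (?c @ [letter_inv m])"
  proof -
    have "last ?c \<noteq> m" if "?c \<noteq> []"
    proof
      assume "last ?c = m"
      then have cm: "?c = butlast ?c @ [m]" using that by (metis append_butlast_last_id)
      then have "butlast ?c \<in> T" using c transversal_prefix_closed by metis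
      moreover have "H #> (word_eval G (butlast ?c) \<otimes> letter_eval G m) = H #> ?g"
        using c cm cw m by (metis eval_snoc word_over_append)
      ultimately have "butlast ?c = a" using pred_unique by blast
      then show False using new c cm by simp
    qed
    then show ?thesis
      using c transversal_reduced by (simp add: reduced_snoc)
  qed
  ultimately show ?thesis
    using a m red new c by (simp add: cross_edge_def)
qed


definition schreier_basis :: "'a set" where
  "schreier_basis = {word_eval G (a @ [(x, True)] @ word_inv c) | a x c. cross_edge a (x, True) c}"

lemma schreier_basis_subset: "schreier_basis \<subseteq> H"
  using cross_edge_eval_in_subgroup by (auto simp: schreier_basis_def)

lemma schreier_basis_subset_carrier: "schreier_basis \<subseteq> carrier G"
  using schreier_basis_subset subgroup.subset[OF subgroup_H] by blast

lemma schreier_basisI: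
  "cross_edge a (x, True) c \<Longrightarrow> word_eval G (a @ [(x, True)] @ word_inv c) \<in> schreier_basis"
  unfolding schreier_basis_def by blast

lemma cross_edge_eval_schreier_basis:
  assumes "cross_edge a m c"
  shows "word_eval G (a @ [m] @ word_inv c) \<in> schreier_basis \<or>
         inv (word_eval G (a @ [m] @ word_inv c)) \<in> schreier_basis"
proof (cases m)
  case (Pair x b)
  show ?thesis
  proof (cases b)
    case True
    then show ?thesis using assms Pair schreier_basisI by simp
  next
    case False
    then have "word_eval G (c @ [(x, True)] @ word_inv a) \<in> schreier_basis"
      using cross_edge_sym[OF assms] Pair schreier_basisI by (simp add: letter_inv_def)
    moreover have
      "word_eval G (c @ [(x, True)] @ word_inv a) = inv (word_eval G (a @ [m] @ word_inv c))"
      using cross_edge_word_over[OF assms] eval_word_inv[of "a @ [m] @ word_inv c"] Pair False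
      by (simp add: word_inv_Cons letter_inv_def)
    ultimately show ?thesis by simp
  qed
qed

definition cross_edge_letter ::
  "('a \<times> bool) list \<Rightarrow> 'a \<times> bool \<Rightarrow> ('a \<times> bool) list \<Rightarrow> 'a \<times> bool \<Rightarrow> bool" where
  "cross_edge_letter a m c l \<longleftrightarrow>
     cross_edge a m c \<and> snd m = snd l \<and> letter_eval G l = word_eval G (a @ [m] @ word_inv c)"

lemma schreier_basis_letter_cross_edge:
  assumes "fst l \<in> schreier_basis"
  obtains a m c where "cross_edge_letter a m c l"
proof -
  obtain a x c where e: "cross_edge a (x, True) c"
      "fst l = word_eval G (a @ [(x, True)] @ word_inv c)"
    using assms by (auto simp: schreier_basis_def)
  show ?thesis
  proof (cases "snd l")
    case True
    then show ?thesis
      using e by (intro that[of a "(x, True)" c]) (simp add: cross_edge_letter_def letter_eval_def)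
  next
    case False
    have "letter_eval G l = inv (word_eval G (a @ [(x, True)] @ word_inv c))"
      using False e by (simp add: letter_eval_def)
    also have "\<dots> = word_eval G (word_inv (a @ [(x, True)] @ word_inv c))"
      using cross_edge_word_over[OF e(1)] by (intro eval_word_inv[symmetric]) simp
    also have "word_inv (a @ [(x, True)] @ word_inv c) = c @ [letter_inv (x, True)] @ word_inv a"
      by (simp add: word_inv_Cons)
    finally show ?thesis
      using False cross_edge_sym[OF e(1)]
      by (intro that[of c "letter_inv (x, True)" a])
          (simp add: cross_edge_letter_def letter_inv_def)
  qed
qed

lemma schreier_elem_letter_in_generate:
  assumes t: "t \<in> T" and l: "fst l \<in> S"
  shows "word_eval G (t @ [l]) \<otimes> inv (word_eval G (coset_rep (word_eval G (t @ [l]))))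
    \<in> generate G schreier_basis"
proof -
  let ?g = "word_eval G (t @ [l])"
  have tw: "word_over S t" using t transversal_word_over by blast
  have g: "?g \<in> carrier G" using tw l by (simp add: eval_closed)
  consider "t @ [l] \<in> T" | "\<not> reduced (t @ [l])" | "reduced (t @ [l])" "t @ [l] \<notin> T" by blast
  then show ?thesis
  proof cases
    case 1
    then have "coset_rep ?g = t @ [l]" using coset_rep_eq g by blast
    then show ?thesis using g by (simp add: generate.one)
  next
    case 2
    then obtain t' where t': "t' \<in> T" "?g = word_eval G t'"
      using transversal_snoc_cancel[OF t l] by blast
    then have "coset_rep ?g = t'"
      by (simp add: coset_rep_eq transversal_eval_closed)
    then show ?thesis
      using t' g by (simp add: generate.one)
  next
    case 3
    let ?c = "coset_rep ?g"
    have e: "cross_edge t l ?c" using cross_edge_coset_rep[OF t l 3] .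
    have w: "word_over S (t @ [l])" "word_over S (word_inv ?c)"
      using cross_edge_word_over[OF e] by auto
    have "word_eval G ((t @ [l]) @ word_inv ?c) = ?g \<otimes> inv (word_eval G ?c)"
      using w by (simp only: eval_append eval_word_inv word_over_word_inv)
    then have "word_eval G (t @ [l] @ word_inv ?c) = ?g \<otimes> inv (word_eval G ?c)"
      by (simp only: append_assoc)
    moreover have "word_eval G (t @ [l] @ word_inv ?c) \<in> carrier G"
      using cross_edge_word_over[OF e] by (simp add: eval_closed)
    ultimately show ?thesis
      using cross_edge_eval_schreier_basis[OF e] by (auto intro: generate.incl generate_if_inv_mem)
  qed
qed

lemma coset_rep_cong: "g \<in> carrier G \<Longrightarrow> h \<in> carrier G \<Longrightarrow> H #> g = H #> h \<Longrightarrow> coset_rep g = coset_rep h"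
  using coset_rep coset_rep_eq by metis

lemma schreier_elem_in_generate:
  assumes "word_over S w"
  shows "word_eval G w \<otimes> inv (word_eval G (coset_rep (word_eval G w))) \<in> generate G schreier_basis"
  using assms
proof (induction w rule: rev_induct)
  case Nil
  then show ?case
    using coset_rep_of_mem[OF subgroup.one_closed[OF subgroup_H]] by (simp add: generate.one)
next
  case (snoc l w)
  let ?t = "coset_rep (word_eval G w)"
  let ?c = "coset_rep (word_eval G (w @ [l]))"
  have w: "word_over S w" and l: "fst l \<in> S" using snoc.prems by auto
  have wc: "word_eval G w \<in> carrier G" using w eval_closed by blast
  have t: "?t \<in> T" "H #> word_eval G ?t = H #> word_eval G w" using coset_rep[OF wc] by auto
  have tw: "word_over S ?t" using t transversal_word_over by blast
  have "H #> word_eval G (?t @ [l]) = H #> word_eval G (w @ [l])"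
    using t tw w l
    by (simp add: eval_snoc rcos_mult_right[OF subgroup_H] eval_closed basis_letter_closed)
  then have c: "coset_rep (word_eval G (?t @ [l])) = ?c"
    using tw w l by (intro coset_rep_cong) (simp_all add: eval_closed)
  have "(word_eval G w \<otimes> inv (word_eval G ?t)) \<otimes>
        (word_eval G (?t @ [l]) \<otimes> inv (word_eval G ?c)) \<in> generate G schreier_basis"
    using snoc.IH[OF w] schreier_elem_letter_in_generate[OF t(1) l] c by (simp add: generate.eng)
  moreover have "word_eval G ?c \<in> carrier G"
    using coset_rep[of "word_eval G (w @ [l])"] transversal_eval_closed w l eval_closed by simp
  moreover have "(word_eval G w \<otimes> inv (word_eval G ?t)) \<otimes>
        (word_eval G (?t @ [l]) \<otimes> inv (word_eval G ?c))
      = word_eval G (w @ [l]) \<otimes> inv (word_eval G ?c)"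
    using tw w l \<open>word_eval G ?c \<in> carrier G\<close>
    by (simp add: eval_snoc eval_closed basis_letter_closed m_assoc inv_mult_cancel_left)
  ultimately show ?case by simp
qed

lemma generate_schreier_basis: "generate G schreier_basis = H"
proof
  show "generate G schreier_basis \<subseteq> H"
    using generate_subgroup_incl[OF schreier_basis_subset subgroup_H] .
  show "H \<subseteq> generate G schreier_basis"
  proof
    fix h assume h: "h \<in> H"
    then have "h \<in> carrier G" using subgroup.subset[OF subgroup_H] by blast
    then obtain w where "word_over S w" "word_eval G w = h" using exists_word by blast
    then show "h \<in> generate G schreier_basis"
      using schreier_elem_in_generate coset_rep_of_mem[OF h] h subgroup.mem_carrier[OF subgroup_H]
      by fastforce
  qed
qed


lemma cross_edge_target_unique: "cross_edge a m c \<Longrightarrow> cross_edge a m c' \<Longrightarrow> c = c'"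
  using transversal_inj by (auto simp: cross_edge_def)

lemma cross_edge_back_letter:
  assumes l: "fst l \<in> schreier_basis" "cross_edge_letter a m c l"
    and l': "fst l' \<in> schreier_basis" "cross_edge_letter c (letter_inv m) c' l'"
  shows "l' = letter_inv l"
proof (rule letter_eq_letter_inv)
  show "fst l \<in> carrier G" "fst l' \<in> carrier G"
    using l(1) l'(1) schreier_basis_subset_carrier by auto
  have e: "cross_edge a m c" using l(2) by (simp add: cross_edge_letter_def)
  have "c' = a"
    using l'(2) cross_edge_target_unique[OF _ cross_edge_sym[OF e]]
    by (simp add: cross_edge_letter_def)
  then have "letter_eval G l' = word_eval G (word_inv (a @ [m] @ word_inv c))"
    using l'(2) by (simp add: cross_edge_letter_def word_inv_Cons)
  then show "letter_eval G l' = inv (letter_eval G l)"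
    using l(2) cross_edge_word_over[OF e]
    by (simp add: cross_edge_letter_def eval_word_inv del: word_inv_append)
  show "snd l' = (\<not> snd l)" using l(2) l'(2) by (simp add: cross_edge_letter_def)
qed

text \<open>Where two consecutive cross-edge words meet, cancellation stops before the middle letters.\<close>

lemma cross_edge_junction:
  assumes e1: "cross_edge a1 m1 c1" and e2: "cross_edge a2 m2 c2"
    and not_back: "\<not> (a2 = c1 \<and> m2 = letter_inv m1)"
    and split: "c1 = d @ c'" "a2 = d @ a'" "c' = [] \<or> a' = [] \<or> hd c' \<noteq> hd a'"
  shows "hd (a' @ [m2] @ Q) \<noteq> letter_inv (last (a1 @ [m1] @ word_inv c'))"
proof
  assume eq: "hd (a' @ [m2] @ Q) = letter_inv (last (a1 @ [m1] @ word_inv c'))"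
  consider "c' = []" "a' = []" | "c' = []" "a' \<noteq> []" | "c' \<noteq> []" "a' = []" | "c' \<noteq> []" "a' \<noteq> []"
    by blast
  then show False
  proof cases
    case 1
    then show False using eq split not_back by simp
  next
    case 2
    then have "a2 = (c1 @ [letter_inv m1]) @ tl a'"
      using eq split by (cases a') auto
    then show False using e1 e2 transversal_prefix_closed by (metis cross_edge_def)
  next
    case 3
    then have "c1 = (a2 @ [m2]) @ tl c'"
      using eq split by (cases c') (auto simp: last_word_inv)
    then show False using e1 e2 transversal_prefix_closed by (metis cross_edge_def)
  next
    case 4
    then show False using eq split by (simp add: last_word_inv)
  qed
qed

lemma schreier_basis_word_Cons:
  assumes l: "fst l \<in> schreier_basis" "cross_edge_letter a1 m1 c1 l"
    and l2: "fst l2 \<in> schreier_basis" "cross_edge_letter a2 m2 c2 l2" "l2 \<noteq> letter_inv l"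
    and Q: "word_over S Q" "reduced (a2 @ [m2] @ Q)"
  shows "\<exists>Q'. word_over S Q' \<and> reduced (a1 @ [m1] @ Q') \<and>
    word_eval G (a1 @ [m1] @ Q') = letter_eval G l \<otimes> word_eval G (a2 @ [m2] @ Q)"
proof -
  have e1: "cross_edge a1 m1 c1" and e2: "cross_edge a2 m2 c2"
    using l(2) l2(2) by (simp_all add: cross_edge_letter_def)
  have w1: "word_over S a1" "word_over S c1" "fst m1 \<in> S"
    and w2: "word_over S a2" "word_over S c2" "fst m2 \<in> S"
    using cross_edge_word_over[OF e1] cross_edge_word_over[OF e2] by auto
  have not_back: "\<not> (a2 = c1 \<and> m2 = letter_inv m1)"
  proof
    assume "a2 = c1 \<and> m2 = letter_inv m1"
    then have "cross_edge_letter c1 (letter_inv m1) c2 l2" using l2(2) by simp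
    then show False using cross_edge_back_letter[OF l l2(1)] l2(3) by blast
  qed
  obtain d c' a' where split: "c1 = d @ c'" "a2 = d @ a'" "c' = [] \<or> a' = [] \<or> hd c' \<noteq> hd a'"
    using longest_common_prefix[of c1 a2] by blast
  let ?P = "a1 @ [m1] @ word_inv c'"
  let ?V = "a' @ [m2] @ Q"
  have "word_eval G (?P @ ?V) = word_eval G ((a1 @ [m1] @ word_inv c1) @ (a2 @ [m2] @ Q))"
    using split w1 w2 Q(1) eval_cancel_word_inv[of ?P d ?V] by simp
  also have "\<dots> = letter_eval G l \<otimes> word_eval G (a2 @ [m2] @ Q)"
    using l(2) w1 w2 Q(1) by (simp add: cross_edge_letter_def eval_append del: append_assoc)
  finally have ev: "word_eval G (?P @ ?V) = letter_eval G l \<otimes> word_eval G (a2 @ [m2] @ Q)" .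
  have "reduced (?P @ word_inv d)" "reduced (d @ ?V)"
    using cross_edge_word_reduced[OF e1] Q(2) split by simp_all
  then have "reduced ?P" "reduced ?V"
    using reduced_append by blast+
  then have "reduced (?P @ ?V)"
    using cross_edge_junction[OF e1 e2 not_back split] reduced_append by blast
  then show ?thesis
    using ev w1 w2 split Q(1) by (intro exI[of _ "word_inv c' @ ?V"]) simp
qed

text \<open>Written out over \<open>S\<close> and freely reduced, a nonempty reduced word in the Schreier basis
  still contains the middle letter of its first basis letter; in particular it is nontrivial.\<close>

lemma schreier_basis_word_normal_form:
  assumes "word_over schreier_basis ws" "reduced ws" "ws \<noteq> []"
  shows "\<exists>a m c Q. cross_edge_letter a m c (hd ws) \<and>
     word_over S Q \<and> reduced (a @ [m] @ Q) \<and> word_eval G (a @ [m] @ Q) = word_eval G ws"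
  using assms
proof (induction ws)
  case (Cons l ws)
  have lB: "fst l \<in> schreier_basis" using Cons.prems by simp
  obtain a1 m1 c1 where e1: "cross_edge_letter a1 m1 c1 l"
    using schreier_basis_letter_cross_edge[OF lB] by blast
  show ?case
  proof (cases "ws = []")
    case True
    have e: "cross_edge a1 m1 c1" using e1 by (simp add: cross_edge_letter_def)
    have "letter_eval G l \<in> carrier G"
      using lB schreier_basis_subset_carrier by (auto intro: letter_eval_closed)
    then have "word_eval G (a1 @ [m1] @ word_inv c1) = word_eval G [l]"
      using e1 by (simp add: cross_edge_letter_def word_eval_Cons_letter del: append_Cons)
    then show ?thesis
      using e1 True cross_edge_word_reduced[OF e] cross_edge_word_over[OF e]
      by (intro exI[of _ a1] exI[of _ m1] exI[of _ c1] exI[of _ "word_inv c1"]) simp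
  next
    case False
    then obtain l2 ws' where ws_def: "ws = l2 # ws'" by (cases ws) auto
    then have ws: "word_over schreier_basis ws" "reduced ws" "l2 \<noteq> letter_inv l"
      using Cons.prems by (auto simp: reduced_Cons_Cons)
    obtain a2 m2 c2 Q where IH: "cross_edge_letter a2 m2 c2 l2" "word_over S Q"
        "reduced (a2 @ [m2] @ Q)" "word_eval G (a2 @ [m2] @ Q) = word_eval G ws"
      using Cons.IH[OF ws(1,2) False] ws_def by auto
    have "fst l2 \<in> schreier_basis" using ws(1) ws_def by simp
    then obtain Q' where "word_over S Q'" "reduced (a1 @ [m1] @ Q')"
        "word_eval G (a1 @ [m1] @ Q') = letter_eval G l \<otimes> word_eval G ws"
      using schreier_basis_word_Cons[OF lB e1 _ IH(1) ws(3) IH(2,3)] IH(4) by auto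
    moreover have "letter_eval G l \<otimes> word_eval G ws = word_eval G (l # ws)"
      by (simp add: word_eval_Cons_letter)
    ultimately show ?thesis
      using e1 by (intro exI[of _ a1] exI[of _ m1] exI[of _ c1] exI[of _ Q']) simp
  qed
qed simp

lemma schreier_basis_word_neq_one:
  assumes "word_over schreier_basis ws" "reduced ws" "ws \<noteq> []"
  shows "word_eval G ws \<noteq> \<one>"
proof -
  obtain a m c Q where "cross_edge a m c" "word_over S Q" "reduced (a @ [m] @ Q)"
      "word_eval G (a @ [m] @ Q) = word_eval G ws"
    using schreier_basis_word_normal_form[OF assms] by (auto simp: cross_edge_letter_def)
  then show ?thesis
    using reduced_word_neq_one[of "a @ [m] @ Q"] cross_edge_word_over by auto
qed

lemma word_eval_subgroup:
  "word_over schreier_basis ws \<Longrightarrow> word_eval (G\<lparr>carrier := H\<rparr>) ws = word_eval G ws"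
proof (induction ws)
  case (Cons l ws)
  then have "fst l \<in> H" using schreier_basis_subset by auto
  then show ?case using Cons by (cases l) (simp add: m_inv_consistent[OF subgroup_H])
qed simp

theorem free_basis_schreier_basis: "free_basis (G\<lparr>carrier := H\<rparr>) schreier_basis"
  unfolding free_basis_def
  using schreier_basis_subset generate_consistent[OF schreier_basis_subset subgroup_H]
    generate_schreier_basis schreier_basis_word_neq_one word_eval_subgroup
  by simp

lemma word_eval_in_schreier_basis:
  assumes "word_over S w" "reduced w" "w \<noteq> []" "butlast w \<in> T" "word_eval G w \<in> H"
  shows "word_eval G w \<in> schreier_basis \<or> inv (word_eval G w) \<in> schreier_basis"
proof -
  have w: "w = butlast w @ [last w]" using assms(3) by simp
  have "w \<notin> T"
  proof
    assume "w \<in> T"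
    then have "coset_rep (word_eval G w) = w"
      using assms(1) by (simp add: coset_rep_eq eval_closed)
    then show False using coset_rep_of_mem[OF assms(5)] assms(3) by simp
  qed
  then have "cross_edge (butlast w) (last w) (coset_rep (word_eval G w))"
    using cross_edge_coset_rep[of "butlast w" "last w"] assms w
    by (metis word_over_append word_over_Cons)
  then show ?thesis
    using cross_edge_eval_schreier_basis coset_rep_of_mem[OF assms(5)] w by fastforce
qed

end

section \<open>Extending partial Schreier transversals\<close>

context partial_schreier_transversal
begin

lemma transversal_cosets: "(\<lambda>t. H #> word_eval G t) ` T \<subseteq> rcosets H"
  using subgroup.subset[OF subgroup_H] transversal_word_over by (auto intro: rcosetsI eval_closed)

lemma schreier_transversal_if_covering:
  assumes "(\<lambda>t. H #> word_eval G t) ` T = rcosets H"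
  shows "schreier_transversal G S H T"
proof -
  have "\<exists>t\<in>T. H #> word_eval G t = H #> g" if "g \<in> carrier G" for g
  proof -
    have "H #> g \<in> (\<lambda>t. H #> word_eval G t) ` T"
      using assms subgroup.subset[OF subgroup_H] that by (simp add: rcosetsI)
    then obtain t where "t \<in> T" "H #> g = H #> word_eval G t" by (rule imageE)
    then show ?thesis by auto
  qed
  then show ?thesis
    by (intro schreier_transversal.intro partial_schreier_transversal_axioms
          schreier_transversal_axioms.intro)
qed

lemma exists_new_coset:
  assumes incomplete: "(\<lambda>t. H #> word_eval G t) ` T \<noteq> rcosets H"
  obtains t l where "t \<in> T" "fst l \<in> S" "H #> word_eval G (t @ [l]) \<notin> (\<lambda>t. H #> word_eval G t) ` T"
proof -
  let ?img = "(\<lambda>t. H #> word_eval G t) ` T"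
  show ?thesis
  proof (rule ccontr)
    assume "\<not> ?thesis"
    then have closed: "\<And>t l. t \<in> T \<Longrightarrow> fst l \<in> S \<Longrightarrow> H #> word_eval G (t @ [l]) \<in> ?img"
      using that by blast
    have all: "H #> word_eval G w \<in> ?img" if "word_over S w" for w
      using that
    proof (induction w rule: rev_induct)
      case Nil
      then show ?case using Nil_in_transversal by (auto intro!: image_eqI[where x="[]"])
    next
      case (snoc l w)
      then obtain t where t: "t \<in> T" "H #> word_eval G w = H #> word_eval G t" by auto
      have tw: "word_over S t" using t transversal_word_over by blast
      have "H #> word_eval G (w @ [l]) = H #> word_eval G (t @ [l])"
        using snoc t tw
        by (simp add: eval_snoc rcos_mult_right[OF subgroup_H] eval_closed basis_letter_closed)
      then show ?case using closed[OF t(1)] snoc by simp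
    qed
    have "rcosets H \<subseteq> ?img"
    proof
      fix C assume "C \<in> rcosets H"
      then obtain g where g: "g \<in> carrier G" "C = H #> g" unfolding RCOSETS_def by auto
      then show "C \<in> ?img" using exists_word[OF g(1)] all by metis
    qed
    then show False using incomplete transversal_cosets by blast
  qed
qed

lemma partial_schreier_transversal_insert:
  assumes t: "t \<in> T" and l: "fst l \<in> S"
    and new: "H #> word_eval G (t @ [l]) \<notin> (\<lambda>t. H #> word_eval G t) ` T"
  shows "partial_schreier_transversal G S H (insert (t @ [l]) T)"
proof -
  have tw: "word_over S t" using t transversal_word_over by blast
  have red: "reduced (t @ [l])"
  proof (rule ccontr)
    assume "\<not> reduced (t @ [l])"
    then obtain t' where "t' \<in> T" "word_eval G (t @ [l]) = word_eval G t'"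
      using transversal_snoc_cancel[OF t l] by blast
    then show False using new by auto
  qed
  have prefix: "u \<in> insert (t @ [l]) T" if "u @ v \<in> insert (t @ [l]) T" for u v
  proof (cases "u @ v = t @ [l]")
    case True
    then have "u = t @ [l] \<or> (\<exists>v'. u @ v' = t)"
      by (cases v rule: rev_exhaust) auto
    then show ?thesis using t transversal_prefix_closed by blast
  next
    case False
    then show ?thesis using that transversal_prefix_closed by blast
  qed
  have inj: "s = s'"
    if "s \<in> insert (t @ [l]) T" "s' \<in> insert (t @ [l]) T" "H #> word_eval G s = H #> word_eval G s'"
    for s s'
  proof -
    have "H #> word_eval G u \<in> (\<lambda>t. H #> word_eval G t) ` T" if "u \<in> T" for u
      using that by blast
    then have "s \<in> T \<longleftrightarrow> s' \<in> T"
      using that new by auto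
    then show ?thesis
      using that transversal_inj by blast
  qed
  have "s \<in> insert (t @ [l]) T \<Longrightarrow> word_over S s \<and> reduced s" for s
    using transversal_word_over transversal_reduced tw l red by auto
  then show ?thesis
  proof (intro partial_schreier_transversal.intro[OF free_group_basis_axioms]
      partial_schreier_transversal_axioms.intro)
    show "u @ v \<in> insert (t @ [l]) T \<Longrightarrow> u \<in> insert (t @ [l]) T" for u v
      by (fact prefix)
  qed (simp_all add: subgroup_H Nil_in_transversal inj)
qed

end

lemma (in free_group_basis) partial_schreier_transversal_extend:
  assumes fin: "finite (rcosets H)" and P: "partial_schreier_transversal G S H P"
  shows "\<exists>T. P \<subseteq> T \<and> schreier_transversal G S H T"
  using P
proof (induction "card (rcosets H) - card ((\<lambda>t. H #> word_eval G t) ` P)" arbitrary: P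
    rule: less_induct)
  case less
  interpret P: partial_schreier_transversal G S H P by (fact less.prems)
  let ?img = "\<lambda>P. (\<lambda>t. H #> word_eval G t) ` P"
  show ?case
  proof (cases "?img P = rcosets H")
    case True
    then show ?thesis using P.schreier_transversal_if_covering by blast
  next
    case False
    then obtain t l where tl: "t \<in> P" "fst l \<in> S" "H #> word_eval G (t @ [l]) \<notin> ?img P"
      using P.exists_new_coset by blast
    let ?P = "insert (t @ [l]) P"
    have P': "partial_schreier_transversal G S H ?P"
      using P.partial_schreier_transversal_insert[OF tl] .
    have fin_img: "finite (?img P)"
      using P.transversal_cosets fin by (rule finite_subset)
    have "card (?img ?P) \<le> card (rcosets H)"
      using card_mono[OF fin partial_schreier_transversal.transversal_cosets[OF P']] .
    moreover have "card (?img ?P) = Suc (card (?img P))"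
      using tl(3) fin_img by simp
    ultimately have "card (rcosets H) - card (?img ?P) < card (rcosets H) - card (?img P)"
      by linarith
    then obtain T where "?P \<subseteq> T" "schreier_transversal G S H T"
      using less.hyps P' by blast
    then show ?thesis by blast
  qed
qed

section \<open>Separating finitely many elements by a subgroup of finite index\<close>

lemma Mod_iso_imp_hom_kernel:
  assumes N: "N \<lhd> G" and H: "group H" and iso: "G Mod N \<cong> H"
  obtains h where "h \<in> hom G H" "kernel G H h = N"
proof -
  interpret N: normal N G by (fact N)
  interpret GN: group "G Mod N" by (rule N.factorgroup_is_group)
  obtain \<phi> where \<phi>: "\<phi> \<in> iso (G Mod N) H" using iso by (auto simp: is_iso_def)
  interpret \<phi>: group_hom "G Mod N" H \<phi>
    using \<phi> H GN.is_group by (simp add: group_hom_def group_hom_axioms_def iso_def)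
  let ?h = "\<phi> \<circ> (\<lambda>a. N #>\<^bsub>G\<^esub> a)"
  have "?h \<in> hom G H"
    using hom_compose[OF N.r_coset_hom_Mod \<phi>.homh] .
  moreover have "kernel G H ?h = N"
  proof -
    have inj: "inj_on \<phi> (carrier (G Mod N))" using \<phi> by (simp add: iso_def bij_betw_def)
    have "?h g = \<one>\<^bsub>H\<^esub> \<longleftrightarrow> g \<in> N" if g: "g \<in> carrier G" for g
    proof -
      have mem: "N #>\<^bsub>G\<^esub> g \<in> carrier (G Mod N)"
        using g N.subset by (simp add: carrier_FactGroup N.rcosetsI)
      have "?h g = \<one>\<^bsub>H\<^esub> \<longleftrightarrow> \<phi> (N #>\<^bsub>G\<^esub> g) = \<phi> \<one>\<^bsub>G Mod N\<^esub>"
        by (simp only: \<phi>.hom_one comp_apply)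
      also have "\<dots> \<longleftrightarrow> N #>\<^bsub>G\<^esub> g = N"
        using inj_on_eq_iff[OF inj mem GN.one_closed] by simp
      also have "\<dots> \<longleftrightarrow> g \<in> N"
        using N.coset_join1[OF _ g N.subgroup_axioms] N.coset_join2[OF g N.subgroup_axioms] by blast
      finally show ?thesis .
    qed
    then show ?thesis using N.subset by (auto simp: kernel_def)
  qed
  ultimately show ?thesis by (rule that)
qed

lemma (in group) finite_rcosets_if_finite_image:
  assumes K: "subgroup K G" and fin: "finite (q ` carrier G)"
    and sep: "\<And>a b. a \<in> carrier G \<Longrightarrow> b \<in> carrier G \<Longrightarrow> q a = q b \<Longrightarrow> a \<otimes> inv b \<in> K"
  shows "finite (rcosets K)"
proof -
  let ?rep = "inv_into (carrier G) q"
  have "rcosets K \<subseteq> (\<lambda>y. K #> ?rep y) ` (q ` carrier G)"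
  proof
    fix C assume "C \<in> rcosets K"
    then obtain g where g: "g \<in> carrier G" "C = K #> g" unfolding RCOSETS_def by auto
    have "?rep (q g) \<in> carrier G" "q (?rep (q g)) = q g"
      using g(1) by (auto intro: inv_into_into f_inv_into_f)
    then have "K #> ?rep (q g) = K #> g"
      using rcos_eq_iff_mult_inv[OF K] sep g(1) by blast
    then show "C \<in> (\<lambda>y. K #> ?rep y) ` (q ` carrier G)" using g by auto
  qed
  then show ?thesis using fin finite_subset by blast
qed

lemma (in group_hom) residually_finite_separating_subgroup:
  assumes rf: "residually_finite H" and E: "finite E" "E \<subseteq> carrier G"
    and nontriv: "\<And>e. e \<in> E \<Longrightarrow> h e \<noteq> \<one>\<^bsub>H\<^esub>"
  obtains K where "subgroup K G" "finite (rcosets K)" "kernel G H h \<subseteq> K" "E \<inter> K = {}"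
proof -
  have "\<forall>e\<in>E. \<exists>N. N \<lhd> H \<and> finite (carrier (H Mod N)) \<and> h e \<notin> N"
  proof
    fix e assume e: "e \<in> E"
    then have "h e \<in> carrier H" using E(2) by auto
    then show "\<exists>N. N \<lhd> H \<and> finite (carrier (H Mod N)) \<and> h e \<notin> N"
      using rf nontriv[OF e] unfolding residually_finite_def by blast
  qed
  then have "\<exists>N. \<forall>e\<in>E. N e \<lhd> H \<and> finite (carrier (H Mod N e)) \<and> h e \<notin> N e"
    by (rule bchoice)
  then obtain N where "\<forall>e\<in>E. N e \<lhd> H \<and> finite (carrier (H Mod N e)) \<and> h e \<notin> N e"
    by blast
  then have N: "\<And>e. e \<in> E \<Longrightarrow> N e \<lhd> H \<and> finite (rcosets\<^bsub>H\<^esub> N e) \<and> h e \<notin> N e"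
    by (simp add: FactGroup_def)
  then have NH: "e \<in> E \<Longrightarrow> subgroup (N e) H" for e by (blast intro: normal_imp_subgroup)
  define K where "K = {g \<in> carrier G. \<forall>e\<in>E. h g \<in> N e}"
  have K: "subgroup K G"
  proof (rule G.subgroupI)
    show "K \<subseteq> carrier G" by (auto simp: K_def)
    show "K \<noteq> {}"
      using subgroup.one_closed[OF NH] by (auto simp: K_def)
    show "inv a \<in> K" if "a \<in> K" for a
      using that subgroup.m_inv_closed[OF NH] by (auto simp: K_def)
    show "a \<otimes> b \<in> K" if "a \<in> K" "b \<in> K" for a b
      using that subgroup.m_closed[OF NH] by (auto simp: K_def)
  qed
  moreover have "finite (rcosets K)"
  proof (rule G.finite_rcosets_if_finite_image[OF K])
    \<comment> \<open>\<open>K\<close> is the kernel of the map into the finite product of the quotients \<open>H / N e\<close>\<close>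
    let ?q = "\<lambda>g. \<lambda>e\<in>E. N e #>\<^bsub>H\<^esub> h g"
    have "?q g \<in> (\<Pi>\<^sub>E e\<in>E. rcosets\<^bsub>H\<^esub> N e)" if "g \<in> carrier G" for g
      using that subgroup.subset[OF NH] by (simp add: PiE_iff H.rcosetsI)
    moreover have "finite (\<Pi>\<^sub>E e\<in>E. rcosets\<^bsub>H\<^esub> N e)"
      using E(1) N by (simp add: finite_PiE)
    ultimately show "finite (?q ` carrier G)"
      by (meson finite_subset image_subsetI)
    show "a \<otimes> inv b \<in> K" if ab: "a \<in> carrier G" "b \<in> carrier G" "?q a = ?q b" for a b
    proof -
      have "h (a \<otimes> inv b) \<in> N e" if "e \<in> E" for e
      proof -
        have "N e #>\<^bsub>H\<^esub> h a = N e #>\<^bsub>H\<^esub> h b"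
          using fun_cong[OF ab(3), of e] that by simp
        then show ?thesis
          using H.rcos_eq_iff_mult_inv[OF NH[OF that]] ab(1,2) by simp
      qed
      then show ?thesis using ab(1,2) by (simp add: K_def)
    qed
  qed
  moreover have "kernel G H h \<subseteq> K"
    using subgroup.one_closed[OF NH] by (auto simp: kernel_def K_def)
  moreover have "E \<inter> K = {}" using N by (auto simp: K_def)
  ultimately show ?thesis by (rule that)
qed

section \<open>Minimal relators\<close>

context free_group_basis
begin

lemma prefix_quotient_notin_normal:
  assumes N: "N \<lhd> G" and w: "word_over S w" "reduced w"
    and minimal: "\<And>s. s \<in> N \<Longrightarrow> s \<noteq> \<one> \<Longrightarrow> length w \<le> word_length G S s"
    and ij: "i < j" "j < length w"
  shows "word_eval G (take i w) \<otimes> inv (word_eval G (take j w)) \<notin> N"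
proof
  let ?p = "word_eval G (take i w)"
  define s where "s = drop i (take j w)"
  have s: "word_over S s" "reduced s" "s \<noteq> []" "length s < length w"
    using w ij word_over_drop[OF word_over_take] reduced_drop[OF reduced_take] by (auto simp: s_def)
  have p: "?p \<in> carrier G" using w(1) word_over_take eval_closed by blast
  have sc: "word_eval G s \<in> carrier G" using s(1) eval_closed by blast
  have "take j w = take i w @ s"
    using ij unfolding s_def by (metis append_take_drop_id less_imp_le min.absorb1 take_take)
  then have pj: "word_eval G (take j w) = ?p \<otimes> word_eval G s"
    using w(1) s(1) by (simp add: eval_append word_over_take)
  assume "?p \<otimes> inv (word_eval G (take j w)) \<in> N"
  \<comment> \<open>conjugating by the common prefix leaves the inverse of the subword \<open>s\<close>\<close>
  then have "inv ?p \<otimes> (?p \<otimes> inv (word_eval G (take j w))) \<otimes> ?p \<in> N"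
    using normal.inv_op_closed1[OF N p] by blast
  also have "inv ?p \<otimes> (?p \<otimes> inv (word_eval G (take j w))) \<otimes> ?p = inv (word_eval G s)"
    using p sc by (simp add: pj inv_mult_group m_assoc inv_mult_cancel_left)
  finally have "word_eval G s \<in> N"
    using subgroup.m_inv_closed[OF normal_imp_subgroup[OF N]] sc by fastforce
  then have "length w \<le> length s"
    using minimal reduced_word_neq_one[OF s(1-3)] word_length_reduced[OF s(1,2)] by fastforce
  then show False using s(4) by simp
qed

lemma partial_schreier_transversal_prefixes:
  assumes H: "subgroup H G" and w: "word_over S w" "reduced w"
    and distinct: "\<And>i j. i < j \<Longrightarrow> j < length w \<Longrightarrow>
      H #> word_eval G (take i w) \<noteq> H #> word_eval G (take j w)"
    and nonempty: "w \<noteq> []"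
  shows "partial_schreier_transversal G S H ((\<lambda>i. take i w) ` {..<length w})"
proof (intro partial_schreier_transversal.intro[OF free_group_basis_axioms]
    partial_schreier_transversal_axioms.intro H)
  let ?P = "(\<lambda>i. take i w) ` {..<length w}"
  show "[] \<in> ?P" using nonempty by (auto intro!: image_eqI[where x = 0])
  show "t \<in> ?P \<Longrightarrow> word_over S t" "t \<in> ?P \<Longrightarrow> reduced t" for t
    using word_over_take[OF w(1)] reduced_take[OF w(2)] by auto
  show "u \<in> ?P" if uv: "u @ v \<in> ?P" for u v
  proof -
    obtain i where i: "i < length w" "u @ v = take i w" using uv by blast
    then have "length (u @ v) = i" by simp
    then have len: "length u \<le> i" by simp
    have "u = take (length u) (u @ v)" by simp
    then have "u = take (length u) (take i w)" by (simp only: i(2))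
    then have "u = take (length u) w" using len by (simp add: min_absorb1)
    then show ?thesis using i(1) len by (intro image_eqI[where x = "length u"]) auto
  qed
  show "t = t'" if tt': "t \<in> ?P" "t' \<in> ?P" "H #> word_eval G t = H #> word_eval G t'" for t t'
  proof -
    obtain i j where "i < length w" "j < length w" "t = take i w" "t' = take j w"
      using tt'(1,2) by blast
    then show ?thesis
      using tt'(3) distinct by (cases i j rule: linorder_cases) fastforce+
  qed
qed

end

lemma (in free_group_basis) exists_free_basis_containing_word:
  assumes H: "subgroup H G" "finite (rcosets H)"
    and w: "word_over S w" "reduced w" "w \<noteq> []" "word_eval G w \<in> H"
    and distinct: "\<And>i j. i < j \<Longrightarrow> j < length w \<Longrightarrow>
      H #> word_eval G (take i w) \<noteq> H #> word_eval G (take j w)"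
  shows "\<exists>B. free_basis (G\<lparr>carrier := H\<rparr>) B \<and> word_eval G w \<in> B"
proof -
  obtain T where T: "(\<lambda>i. take i w) ` {..<length w} \<subseteq> T" "schreier_transversal G S H T"
    using partial_schreier_transversal_extend[OF H(2)
        partial_schreier_transversal_prefixes[OF H(1) w(1,2) distinct w(3)]] by blast
  interpret T: schreier_transversal G S H T by (fact T(2))
  have "butlast w \<in> T" using T(1) w(3) by (auto simp: butlast_conv_take)
  then have "word_eval G w \<in> T.schreier_basis \<or> inv (word_eval G w) \<in> T.schreier_basis"
    using T.word_eval_in_schreier_basis w by blast
  then show ?thesis
  proof
    assume inv: "inv (word_eval G w) \<in> T.schreier_basis"
    interpret K: group "G\<lparr>carrier := H\<rparr>" by (rule subgroup_imp_group[OF H(1)])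
    have "inv\<^bsub>G\<lparr>carrier := H\<rparr>\<^esub> (inv (word_eval G w)) = word_eval G w"
      using w(4) H(1) by (simp add: m_inv_consistent subgroup.m_inv_closed subgroup.mem_carrier)
    then have "word_eval G w \<in> insert (inv\<^bsub>G\<lparr>carrier := H\<rparr>\<^esub> (inv (word_eval G w)))
        (T.schreier_basis - {inv (word_eval G w)})"
      by simp
    then show ?thesis
      using K.free_basis_insert_inv[OF T.free_basis_schreier_basis inv] by blast
  qed (use T.free_basis_schreier_basis in blast)
qed

lemma (in free_group_basis) minimal_relator_in_free_basis:
  assumes h: "group_hom G K h" and rf: "residually_finite K"
    and w: "word_over S w" "reduced w" "w \<noteq> []" "word_eval G w \<in> kernel G K h"
    and minimal: "\<And>s. s \<in> kernel G K h \<Longrightarrow> s \<noteq> \<one> \<Longrightarrow> length w \<le> word_length G S s"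
  shows "\<exists>H. subgroup H G \<and> finite (rcosets H) \<and> kernel G K h \<subseteq> H \<and>
    (\<exists>B. free_basis (G\<lparr>carrier := H\<rparr>) B \<and> word_eval G w \<in> B)"
proof -
  interpret h: group_hom G K h by (fact h)
  let ?p = "\<lambda>i. word_eval G (take i w)"
  define E where "E = {?p i \<otimes> inv ?p j | i j. i < j \<and> j < length w}"
  have fin: "finite E"
  proof -
    have "E \<subseteq> (\<lambda>(i, j). ?p i \<otimes> inv ?p j) ` ({..<length w} \<times> {..<length w})"
      by (auto simp: E_def)
    then show ?thesis by (rule finite_subset) simp
  qed
  have sub: "E \<subseteq> carrier G"
    using w(1) by (auto simp: E_def eval_closed word_over_take)
  have "e \<notin> kernel G K h" if "e \<in> E" for e
    using that prefix_quotient_notin_normal[OF h.normal_kernel w(1,2) minimal] by (auto simp: E_def)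
  then have nontriv: "h e \<noteq> \<one>\<^bsub>K\<^esub>" if "e \<in> E" for e
    using that sub by (auto simp: kernel_def)
  obtain H where H: "subgroup H G" "finite (rcosets H)" "kernel G K h \<subseteq> H" "E \<inter> H = {}"
    by (rule h.residually_finite_separating_subgroup[OF rf fin sub nontriv])
  have "H #> ?p i \<noteq> H #> ?p j" if "i < j" "j < length w" for i j
    using that H(4) rcos_eq_iff_mult_inv[OF H(1)] eval_closed[OF word_over_take[OF w(1)]]
    by (auto simp: E_def)
  then show ?thesis
    using exists_free_basis_containing_word[OF H(1,2) w(1-3)] H w(4) by blast
qed

theorem lemma2:
  fixes G :: "('g, 'c) monoid_scheme" and F :: "('f, 'd) monoid_scheme"
    and S :: "'f set" and R :: "'f set" and r :: 'f
  assumes "group G" and "finitely_generated G" and "residually_finite G"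
    and "carrier G \<noteq> {\<one>\<^bsub>G\<^esub>}"
    and "group F" and "free_basis F S" and "card S = group_rank G"
    and "R \<lhd> F" and "F Mod R \<cong> G"
    and "R \<noteq> {\<one>\<^bsub>F\<^esub>}"
    and "r \<in> R" and "r \<noteq> \<one>\<^bsub>F\<^esub>"
    and "\<And>s. s \<in> R \<Longrightarrow> s \<noteq> \<one>\<^bsub>F\<^esub> \<Longrightarrow> word_length F S r \<le> word_length F S s"
  shows "\<exists>F1. subgroup F1 F \<and> finite (rcosets\<^bsub>F\<^esub> F1) \<and> R \<subseteq> F1 \<and>
           (\<exists>B. free_basis (F\<lparr>carrier := F1\<rparr>) B \<and> r \<in> B)"
proof -
  interpret F: free_group_basis F S
    using assms(5,6) by (rule free_group_basis.intro[OF _ free_group_basis_axioms.intro])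
  obtain h where h: "h \<in> hom F G" "kernel F G h = R"
    using Mod_iso_imp_hom_kernel[OF assms(8,1,9)] .
  have hom: "group_hom F G h"
    using assms(1,5) h(1) by (simp add: group_hom_def group_hom_axioms_def)
  have "r \<in> carrier F"
    using normal_imp_subgroup[OF assms(8)] assms(11) by (rule subgroup.mem_carrier)
  then obtain w where w: "word_over S w" "reduced w" "word_eval F w = r"
    using F.exists_reduced_word by blast
  have "w \<noteq> []" using w(3) assms(12) by auto
  have "word_length F S r = length w"
    using F.word_length_reduced[OF w(1,2)] w(3) by simp
  then have "length w \<le> word_length F S s" if "s \<in> R" "s \<noteq> \<one>\<^bsub>F\<^esub>" for s
    using assms(13)[OF that] by simp
  then show ?thesis
    using F.minimal_relator_in_free_basis[OF hom assms(3) w(1,2) \<open>w \<noteq> []\<close>] h(2) w(3) assms(11)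
    by simp
qed

end
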